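(* There exists a constant $c>0$ such that if $p=p(n)\le c/n^2$, then asymptotically almost surely the random triangular group $\Gamma(n,p)$ is a free group.
   Context: The random triangular group $\Gamma(n,p)$ is the group given by a presentation $\langle S\mid R\rangle$, where $S$ is a set of $n$ generators and $R$ is a random set of relations obtained by including independently, each with probability $p$, every cyclically reduced word of length three over the alphabet $S\cup S^{-1}$ (i.e. every word $abc$ with letters in $S\cup S^{-1}$ such that $a\neq b^{-1}$, $b\neq c^{-1}$, $c\neq a^{-1}$; distinct words are distinct candidates, in particular cyclic shifts of a word are distinct words). A property holds asymptotically almost surely (a.a.s.) if its probability tends to $1$ as $n\to\infty$. *)

theory Defs
  imports Complex_Main "HOL-Algebra.Group"
begin

text \<open>Letters over the alphabet S \<union> S^-1 with S = {s_0,...,s_(n-1)}: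
  a letter (i, False) is the generator s_i, (i, True) is its inverse.\<close>
type_synonym letter = "nat \<times> bool"

definition inv_letter :: "letter \<Rightarrow> letter" where
  "inv_letter x = (fst x, \<not> snd x)"

definition words :: "nat \<Rightarrow> letter list set" where
  "words n = {w. \<forall>x\<in>set w. fst x < n}"

definition pres_step :: "nat \<Rightarrow> letter list set \<Rightarrow> (letter list \<times> letter list) set" where
  "pres_step n R =
     {(u @ [x, inv_letter x] @ v, u @ v) | u v x. u \<in> words n \<and> v \<in> words n \<and> fst x < n}
   \<union> {(u @ r @ v, u @ v) | u v r. u \<in> words n \<and> v \<in> words n \<and> r \<in> R}"

definition pres_eq :: "nat \<Rightarrow> letter list set \<Rightarrow> (letter list \<times> letter list) set" where
  "pres_eq n R = (pres_step n R \<union> (pres_step n R)\<inverse>)\<^sup>*"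

definition presented_group :: "nat \<Rightarrow> letter list set \<Rightarrow> letter list set monoid" where
  "presented_group n R =
     \<lparr> carrier = words n // pres_eq n R,
       mult = (\<lambda>A B. pres_eq n R `` {(SOME a. a \<in> A) @ (SOME b. b \<in> B)}),
       one = pres_eq n R `` {[]} \<rparr>"

definition free_group_rank :: "nat \<Rightarrow> letter list set monoid" where
  "free_group_rank k = presented_group k {}"

text \<open>A group is free if it is isomorphic to a free group (of some finite rank;
  every quotient of a finitely generated group is finitely generated).\<close>
definition is_free_group :: "('a, 'b) monoid_scheme \<Rightarrow> bool" where
  "is_free_group G \<longleftrightarrow> (\<exists>k. G \<cong> free_group_rank k)"

definition tri_words :: "nat \<Rightarrow> letter list set" where
  "tri_words n = {[a, b, c] | a b c. fst a < n \<and> fst b < n \<and> fst c < n \<and>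
       a \<noteq> inv_letter b \<and> b \<noteq> inv_letter c \<and> c \<noteq> inv_letter a}"

text \<open>Probability that \<Gamma>(n,p) is free: each candidate relator included independently
  with probability p.\<close>
definition prob_tri_free :: "nat \<Rightarrow> real \<Rightarrow> real" where
  "prob_tri_free n p =
     (\<Sum>R\<in>Pow (tri_words n).
        if is_free_group (presented_group n R)
        then p ^ card R * (1 - p) ^ (card (tri_words n) - card R) else 0)"

end

theory Submission
  imports Defs
begin

text \<open>A presentation defines a free group as soon as its relators can be discarded one at a
  time, each time eliminating by a Tietze transformation a generator that occurs exactly once in
  the discarded relator and in none of the remaining ones. When this fails, some nonempty family
  \<open>S\<close> of triangular relators uses each of its generators at least twice, so it involves at most
  \<open>3 |S| / 2\<close> generators. Hence, if \<open>\<Gamma>(n,p)\<close> is not free, then for some \<open>v\<close> there are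
  \<open>\<lceil>2v/3\<rceil>\<close> relators supported on \<open>v\<close> generators. For \<open>p \<le> c / n\<^sup>2\<close> the expected number of such
  configurations is at most \<open>(n choose v) ((2v)\<^sup>3 choose \<lceil>2v/3\<rceil>) p\<^bsup>\<lceil>2v/3\<rceil>\<^esup> \<le> (v / n) 2\<^bsup>-v\<^esup>\<close>,
  and summing over \<open>v\<close> bounds the probability of non-freeness by \<open>2 / n\<close>.\<close>

section \<open>Words and substitutions\<close>

definition inv_word :: "letter list \<Rightarrow> letter list" where
  "inv_word w = rev (map inv_letter w)"

definition subst_letter :: "(nat \<Rightarrow> letter list) \<Rightarrow> letter \<Rightarrow> letter list" where
  "subst_letter f l = (if snd l then inv_word (f (fst l)) else f (fst l))"

definition subst :: "(nat \<Rightarrow> letter list) \<Rightarrow> letter list \<Rightarrow> letter list" where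
  "subst f w = concat (map (subst_letter f) w)"

lemma inv_letter_inv_letter [simp]: "inv_letter (inv_letter x) = x"
  by (simp add: inv_letter_def)

lemma fst_inv_letter [simp]: "fst (inv_letter x) = fst x"
  by (simp add: inv_letter_def)

lemma inv_word_inv_word [simp]: "inv_word (inv_word w) = w"
  by (simp add: inv_word_def rev_map comp_def)

lemma inv_word_Nil [simp]: "inv_word [] = []"
  by (simp add: inv_word_def)

lemma inv_word_Cons [simp]: "inv_word (x # w) = inv_word w @ [inv_letter x]"
  by (simp add: inv_word_def)

lemma inv_word_append [simp]: "inv_word (a @ b) = inv_word b @ inv_word a"
  by (simp add: inv_word_def)

lemma fst_set_inv_word [simp]: "fst ` set (inv_word w) = fst ` set w"
  by (auto simp: inv_word_def image_image)

lemma words_Nil [simp]: "[] \<in> words n"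
  by (simp add: words_def)

lemma words_Cons [simp]: "x # w \<in> words n \<longleftrightarrow> fst x < n \<and> w \<in> words n"
  by (auto simp: words_def)

lemma words_append [simp]: "a @ b \<in> words n \<longleftrightarrow> a \<in> words n \<and> b \<in> words n"
  by (auto simp: words_def)

lemma inv_word_in_words [simp]: "inv_word w \<in> words n \<longleftrightarrow> w \<in> words n"
  by (auto simp: words_def inv_word_def)

lemma subst_Nil [simp]: "subst f [] = []"
  by (simp add: subst_def)

lemma subst_Cons [simp]: "subst f (x # w) = subst_letter f x @ subst f w"
  by (simp add: subst_def)

lemma subst_append [simp]: "subst f (a @ b) = subst f a @ subst f b"
  by (simp add: subst_def)

lemma subst_letter_inv_letter: "subst_letter f (inv_letter l) = inv_word (subst_letter f l)"
  by (cases l) (auto simp: subst_letter_def inv_letter_def)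

lemma subst_inv_word: "subst f (inv_word w) = inv_word (subst f w)"
  by (induction w) (auto simp: subst_letter_inv_letter)

lemma subst_in_words:
  "(\<And>i. i < n \<Longrightarrow> f i \<in> words m) \<Longrightarrow> w \<in> words n \<Longrightarrow> subst f w \<in> words m"
  by (induction w) (auto simp: subst_letter_def)

lemma subst_subst: "subst f (subst g w) = subst (\<lambda>i. subst f (g i)) w"
proof -
  have "subst_letter (\<lambda>i. subst f (g i)) l = subst f (subst_letter g l)" for l
    by (auto simp: subst_letter_def subst_inv_word)
  then show ?thesis
    by (induction w) auto
qed

lemma subst_cong:
  "(\<And>l. l \<in> set w \<Longrightarrow> f (fst l) = f' (fst l)) \<Longrightarrow> subst f w = subst f' w"
  by (induction w) (auto simp: subst_letter_def)

lemma subst_eq_self: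
  "(\<And>l. l \<in> set w \<Longrightarrow> f (fst l) = [(fst l, False)]) \<Longrightarrow> subst f w = w"
  by (induction w) (auto simp: subst_letter_def inv_letter_def)

lemma fst_set_subst_letter: "fst ` set (subst_letter f l) = fst ` set (f (fst l))"
  by (simp add: subst_letter_def)

lemma fst_set_subst: "fst ` set (subst f w) = (\<Union>l\<in>set w. fst ` set (f (fst l)))"
  by (induction w) (simp_all add: fst_set_subst_letter image_Un)

section \<open>Presented groups\<close>

lemma pres_eq_refl [simp]: "(a, a) \<in> pres_eq n R"
  by (simp add: pres_eq_def)

lemma pres_eq_sym: "(a, b) \<in> pres_eq n R \<Longrightarrow> (b, a) \<in> pres_eq n R"
  unfolding pres_eq_def
  by (metis converse_Un converse_converse rtrancl_converseI sup_commute)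

lemma pres_eq_trans:
  "(a, b) \<in> pres_eq n R \<Longrightarrow> (b, c) \<in> pres_eq n R \<Longrightarrow> (a, c) \<in> pres_eq n R"
  unfolding pres_eq_def by (rule rtrancl_trans)

lemma pres_step_imp_pres_eq: "(a, b) \<in> pres_step n R \<Longrightarrow> (a, b) \<in> pres_eq n R"
  unfolding pres_eq_def by auto

lemma pres_eq_free_reduction: "fst x < n \<Longrightarrow> ([x, inv_letter x], []) \<in> pres_eq n R"
  by (rule pres_step_imp_pres_eq)
    (auto simp: pres_step_def intro!: exI[of _ "[]"] exI[of _ "fst x"] exI[of _ "snd x"])

lemma pres_eq_relator: "r \<in> R \<Longrightarrow> (r, []) \<in> pres_eq n R"
  by (rule pres_step_imp_pres_eq) (auto simp: pres_step_def intro!: exI[of _ "[]"])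

lemma pres_eq_mono: "R \<subseteq> R' \<Longrightarrow> (a, b) \<in> pres_eq n R \<Longrightarrow> (a, b) \<in> pres_eq n R'"
  unfolding pres_eq_def
  by (rule rtrancl_mono[THEN subsetD]) (auto simp: pres_step_def)

lemma pres_step_context:
  assumes "(a, b) \<in> pres_step n R" "c \<in> words n" "d \<in> words n"
  shows "(c @ a @ d, c @ b @ d) \<in> pres_step n R"
  using assms(1)[unfolded pres_step_def]
proof (elim UnE CollectE exE conjE)
  fix u v x
  assume "(a, b) = (u @ [x, inv_letter x] @ v, u @ v)" "u \<in> words n" "v \<in> words n" "fst x < n"
  with assms(2,3) show ?thesis
    unfolding pres_step_def by (intro UnI1 CollectI exI[of _ "c @ u"] exI[of _ "v @ d"] exI[of _ x]) auto
next
  fix u v r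
  assume "(a, b) = (u @ r @ v, u @ v)" "u \<in> words n" "v \<in> words n" "r \<in> R"
  with assms(2,3) show ?thesis
    unfolding pres_step_def by (intro UnI2 CollectI exI[of _ "c @ u"] exI[of _ "v @ d"] exI[of _ r]) auto
qed

lemma pres_eq_context:
  assumes "(a, b) \<in> pres_eq n R" "c \<in> words n" "d \<in> words n"
  shows "(c @ a @ d, c @ b @ d) \<in> pres_eq n R"
  using assms(1) unfolding pres_eq_def
proof (induction rule: rtrancl_induct)
  case (step y z)
  then have "(c @ y @ d, c @ z @ d) \<in> pres_step n R \<union> (pres_step n R)\<inverse>"
    using pres_step_context assms(2,3) by blast
  with step.IH show ?case by (rule rtrancl_into_rtrancl)
qed simp

lemma pres_eq_append:
  "(a, a') \<in> pres_eq n R \<Longrightarrow> (b, b') \<in> pres_eq n R \<Longrightarrow> a \<in> words n \<Longrightarrow> b' \<in> words n \<Longrightarrow>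
    (a @ b, a' @ b') \<in> pres_eq n R"
  using pres_eq_context[of a a' n R "[]" b'] pres_eq_context[of b b' n R a "[]"]
  by (auto intro: pres_eq_trans)

lemma pres_step_in_words:
  "R \<subseteq> words n \<Longrightarrow> (a, b) \<in> pres_step n R \<Longrightarrow> a \<in> words n \<and> b \<in> words n"
  unfolding pres_step_def by (auto simp: subset_iff)

lemma pres_eq_in_words:
  assumes "R \<subseteq> words n" "(a, b) \<in> pres_eq n R" "a \<in> words n"
  shows "b \<in> words n"
  using assms(2,3) unfolding pres_eq_def
proof (induction rule: rtrancl_induct)
  case (step y z)
  then show ?case
    using pres_step_in_words[OF assms(1)] by blast
qed

lemma pres_eq_append_inv_word: "w \<in> words n \<Longrightarrow> (w @ inv_word w, []) \<in> pres_eq n R"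
proof (induction w)
  case (Cons x w)
  then have "([x] @ (w @ inv_word w) @ [inv_letter x], [x] @ [] @ [inv_letter x]) \<in> pres_eq n R"
    by (intro pres_eq_context) auto
  moreover have "([x, inv_letter x], []) \<in> pres_eq n R"
    using Cons.prems by (intro pres_eq_free_reduction) simp
  ultimately show ?case
    by (auto intro: pres_eq_trans)
qed simp

lemma pres_eq_inv_word_append: "w \<in> words n \<Longrightarrow> (inv_word w @ w, []) \<in> pres_eq n R"
  using pres_eq_append_inv_word[of "inv_word w" n R] by simp

lemma pres_eq_inv_word:
  assumes ab: "(a, b) \<in> pres_eq n R" and words: "a \<in> words n" "b \<in> words n"
  shows "(inv_word a, inv_word b) \<in> pres_eq n R"
proof -
  have "(inv_word a @ (b @ inv_word b) @ [], inv_word a @ [] @ []) \<in> pres_eq n R"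
    using words by (intro pres_eq_context pres_eq_append_inv_word) auto
  moreover have "(inv_word a @ b @ inv_word b, inv_word a @ a @ inv_word b) \<in> pres_eq n R"
    using words by (intro pres_eq_context pres_eq_sym[OF ab]) auto
  moreover have "([] @ (inv_word a @ a) @ inv_word b, [] @ [] @ inv_word b) \<in> pres_eq n R"
    using words by (intro pres_eq_context pres_eq_inv_word_append) auto
  ultimately show ?thesis
    by simp (meson pres_eq_sym pres_eq_trans)
qed

lemma pres_eq_isolate_letter:
  assumes r: "(u @ y # w, []) \<in> pres_eq n R" and words: "u \<in> words n" "w \<in> words n" "fst y < n"
  shows "(inv_word (w @ u), [y]) \<in> pres_eq n R"
proof -
  have "(inv_word u @ [] @ inv_word w, inv_word u @ (u @ y # w) @ inv_word w) \<in> pres_eq n R"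
    using words by (intro pres_eq_context pres_eq_sym[OF r]) auto
  moreover have "([] @ (inv_word u @ u) @ y # w @ inv_word w, [] @ [] @ y # w @ inv_word w)
      \<in> pres_eq n R"
    using words by (intro pres_eq_context pres_eq_inv_word_append) auto
  moreover have "([y] @ (w @ inv_word w) @ [], [y] @ [] @ []) \<in> pres_eq n R"
    using words by (intro pres_eq_context pres_eq_append_inv_word) auto
  ultimately show ?thesis
    by simp (meson pres_eq_trans)
qed

lemma subst_pres_eq_self:
  assumes g: "\<And>i. i < n \<Longrightarrow> (g i, [(i, False)]) \<in> pres_eq n R" "\<And>i. i < n \<Longrightarrow> g i \<in> words n"
    and w: "w \<in> words n"
  shows "(subst g w, w) \<in> pres_eq n R"
  using w
proof (induction w)
  case (Cons l w)
  obtain i b where l: "l = (i, b)" by force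
  with Cons.prems have i: "i < n" by simp
  have "(subst_letter g l, [l]) \<in> pres_eq n R"
    using pres_eq_inv_word[OF g(1)[OF i] g(2)[OF i]] g(1)[OF i] i
    by (cases b) (simp_all add: l subst_letter_def inv_letter_def)
  moreover have "subst_letter g l \<in> words n"
    using g(2)[OF i] by (simp add: l subst_letter_def)
  ultimately show ?case
    using pres_eq_append[of _ "[l]" n R "subst g w" w] Cons by simp
qed simp

lemma pres_eq_subst:
  assumes f: "\<And>i. i < n \<Longrightarrow> f i \<in> words m"
    and rel: "\<And>r. r \<in> R \<Longrightarrow> (subst f r, []) \<in> pres_eq m R2"
    and ab: "(a, b) \<in> pres_eq n R"
  shows "(subst f a, subst f b) \<in> pres_eq m R2"
proof -
  have subst_step: "(subst f c, subst f d) \<in> pres_eq m R2" if "(c, d) \<in> pres_step n R" for c d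
    using that unfolding pres_step_def
  proof (elim UnE CollectE exE conjE)
    fix u v x
    assume cd: "(c, d) = (u @ [x, inv_letter x] @ v, u @ v)" and "u \<in> words n" "v \<in> words n" "fst x < n"
    then have "subst f u \<in> words m" "subst f v \<in> words m" "subst_letter f x \<in> words m"
      using f subst_in_words[OF f] by (auto simp: subst_letter_def)
    from pres_eq_context[OF pres_eq_append_inv_word[OF this(3)] this(1,2)] cd
    show ?thesis by (simp add: subst_letter_inv_letter)
  next
    fix u v r
    assume cd: "(c, d) = (u @ r @ v, u @ v)" and "u \<in> words n" "v \<in> words n" "r \<in> R"
    then have "subst f u \<in> words m" "subst f v \<in> words m"
      using subst_in_words[OF f] by auto
    from pres_eq_context[OF rel[OF \<open>r \<in> R\<close>] this] cd show ?thesis by simp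
  qed
  from ab show ?thesis
    unfolding pres_eq_def[of n R]
  proof (induction rule: rtrancl_induct)
    case (step y z)
    from step.hyps(2) have "(subst f y, subst f z) \<in> pres_eq m R2"
    proof
      assume "(y, z) \<in> (pres_step n R)\<inverse>"
      then show ?thesis by (auto intro: pres_eq_sym subst_step)
    qed (rule subst_step)
    with step.IH show ?case by (rule pres_eq_trans)
  qed simp
qed

definition word_class :: "nat \<Rightarrow> letter list set \<Rightarrow> letter list \<Rightarrow> letter list set" where
  "word_class n R w = pres_eq n R `` {w}"

lemma word_class_eq_iff: "word_class n R a = word_class n R b \<longleftrightarrow> (a, b) \<in> pres_eq n R"
  unfolding word_class_def
  by (metis Image_singleton_iff pres_eq_refl pres_eq_sym pres_eq_trans equalityI subsetI)

lemma carrier_presented_group: "carrier (presented_group n R) = word_class n R ` words n"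
  by (auto simp: presented_group_def quotient_def word_class_def)

lemma pres_eq_some_word_class: "(a, SOME a'. a' \<in> word_class n R a) \<in> pres_eq n R"
proof -
  have "a \<in> word_class n R a"
    by (simp add: word_class_def)
  then have "(SOME a'. a' \<in> word_class n R a) \<in> word_class n R a"
    by (rule someI)
  then show ?thesis
    by (simp add: word_class_def)
qed

lemma mult_presented_group:
  assumes "R \<subseteq> words n" "a \<in> words n" "b \<in> words n"
  shows "mult (presented_group n R) (word_class n R a) (word_class n R b) = word_class n R (a @ b)"
proof -
  let ?a = "SOME a'. a' \<in> word_class n R a" and ?b = "SOME b'. b' \<in> word_class n R b"
  have "?b \<in> words n"
    using pres_eq_in_words[OF assms(1) pres_eq_some_word_class assms(3)] .
  then have "(a @ b, ?a @ ?b) \<in> pres_eq n R"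
    using assms by (intro pres_eq_append pres_eq_some_word_class)
  then show ?thesis
    by (simp add: presented_group_def word_class_def[symmetric] word_class_eq_iff pres_eq_sym)
qed

definition induced_hom ::
    "(nat \<Rightarrow> letter list) \<Rightarrow> nat \<Rightarrow> letter list set \<Rightarrow> letter list set \<Rightarrow> letter list set" where
  "induced_hom f m R' A = word_class m R' (subst f (SOME a. a \<in> A))"

lemma induced_hom_word_class:
  assumes "\<And>i. i < n \<Longrightarrow> f i \<in> words m" "\<And>r. r \<in> R \<Longrightarrow> (subst f r, []) \<in> pres_eq m R'"
  shows "induced_hom f m R' (word_class n R a) = word_class m R' (subst f a)"
  unfolding induced_hom_def word_class_eq_iff
  by (rule pres_eq_sym, rule pres_eq_subst[OF assms pres_eq_some_word_class])

lemma induced_hom_in_hom: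
  assumes f: "\<And>i. i < n \<Longrightarrow> f i \<in> words m"
    and rel: "\<And>r. r \<in> R \<Longrightarrow> (subst f r, []) \<in> pres_eq m R'"
    and R: "R \<subseteq> words n" and R': "R' \<subseteq> words m"
  shows "induced_hom f m R' \<in> hom (presented_group n R) (presented_group m R')"
proof (rule homI)
  fix x assume "x \<in> carrier (presented_group n R)"
  then obtain a where "a \<in> words n" "x = word_class n R a"
    by (auto simp: carrier_presented_group)
  then show "induced_hom f m R' x \<in> carrier (presented_group m R')"
    by (simp add: induced_hom_word_class[OF f rel] carrier_presented_group subst_in_words[OF f])
next
  fix x y
  assume "x \<in> carrier (presented_group n R)" "y \<in> carrier (presented_group n R)"
  then obtain a b where "a \<in> words n" "x = word_class n R a" "b \<in> words n" "y = word_class n R b"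
    by (auto simp: carrier_presented_group)
  then show "induced_hom f m R' (x \<otimes>\<^bsub>presented_group n R\<^esub> y) =
      induced_hom f m R' x \<otimes>\<^bsub>presented_group m R'\<^esub> induced_hom f m R' y"
    by (simp add: mult_presented_group[OF R] mult_presented_group[OF R']
        induced_hom_word_class[OF f rel] subst_in_words[OF f])
qed

lemma induced_hom_inverse:
  assumes f: "\<And>i. i < n \<Longrightarrow> f i \<in> words m" and e: "\<And>j. j < m \<Longrightarrow> e j \<in> words n"
    and f_rel: "\<And>r. r \<in> R \<Longrightarrow> (subst f r, []) \<in> pres_eq m R'"
    and e_rel: "\<And>r. r \<in> R' \<Longrightarrow> (subst e r, []) \<in> pres_eq n R"
    and ef: "\<And>i. i < n \<Longrightarrow> (subst e (f i), [(i, False)]) \<in> pres_eq n R"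
    and A: "A \<in> carrier (presented_group n R)"
  shows "induced_hom e n R (induced_hom f m R' A) = A"
proof -
  obtain a where a: "a \<in> words n" "A = word_class n R a"
    using A by (auto simp: carrier_presented_group)
  have ef_words: "subst e (f i) \<in> words n" if "i < n" for i
    using subst_in_words[OF e f[OF that]] .
  have "induced_hom e n R (induced_hom f m R' A) = word_class n R (subst e (subst f a))"
    by (simp add: a induced_hom_word_class[OF f f_rel] induced_hom_word_class[OF e e_rel])
  also have "\<dots> = A"
    unfolding a subst_subst word_class_eq_iff
    using subst_pres_eq_self[OF ef ef_words a(1)] .
  finally show ?thesis .
qed

lemma induced_hom_iso:
  assumes R: "R \<subseteq> words n" and R': "R' \<subseteq> words m"
    and f: "\<And>i. i < n \<Longrightarrow> f i \<in> words m" and e: "\<And>j. j < m \<Longrightarrow> e j \<in> words n"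
    and f_rel: "\<And>r. r \<in> R \<Longrightarrow> (subst f r, []) \<in> pres_eq m R'"
    and e_rel: "\<And>r. r \<in> R' \<Longrightarrow> (subst e r, []) \<in> pres_eq n R"
    and ef: "\<And>i. i < n \<Longrightarrow> (subst e (f i), [(i, False)]) \<in> pres_eq n R"
    and fe: "\<And>j. j < m \<Longrightarrow> (subst f (e j), [(j, False)]) \<in> pres_eq m R'"
  shows "induced_hom f m R' \<in> iso (presented_group n R) (presented_group m R')"
proof -
  have hom_f: "induced_hom f m R' \<in> hom (presented_group n R) (presented_group m R')"
    by (rule induced_hom_in_hom[OF f f_rel R R'])
  have hom_e: "induced_hom e n R \<in> hom (presented_group m R') (presented_group n R)"
    by (rule induced_hom_in_hom[OF e e_rel R' R])
  have "bij_betw (induced_hom f m R') (carrier (presented_group n R)) (carrier (presented_group m R'))"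
    using hom_f hom_e
    by (intro bij_betw_byWitness[where f' = "induced_hom e n R"])
      (auto simp: induced_hom_inverse[OF f e f_rel e_rel ef] induced_hom_inverse[OF e f e_rel f_rel fe]
        dest: hom_carrier)
  with hom_f show ?thesis
    by (simp add: iso_def)
qed

section \<open>Collapsible presentations define free groups\<close>

definition letters :: "letter list set \<Rightarrow> nat set" where
  "letters R = (\<Union>r\<in>R. fst ` set r)"

definition occurrences :: "nat \<Rightarrow> letter list \<Rightarrow> nat" where
  "occurrences i r = length (filter (\<lambda>l. fst l = i) r)"

text \<open>A relator in which the generator \<open>i\<close> occurs exactly once, while no other relator
  involves \<open>i\<close>, lets us eliminate \<open>i\<close> by a Tietze transformation; collapsibility allows
  repeating this until no relator is left.\<close>

definition collapsible :: "letter list set \<Rightarrow> bool" where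
  "collapsible R \<longleftrightarrow>
     (\<forall>S\<subseteq>R. S \<noteq> {} \<longrightarrow> (\<exists>r\<in>S. \<exists>i. occurrences i r = 1 \<and> i \<notin> letters (S - {r})))"

text \<open>The generators in \<open>X\<close> have been eliminated: \<open>g\<close> expresses each of them as a word in
  the remaining generators occurring in \<open>R\<close>.\<close>

definition elimination :: "nat \<Rightarrow> letter list set \<Rightarrow> nat set \<Rightarrow> (nat \<Rightarrow> letter list) \<Rightarrow> bool" where
  "elimination n R X g \<longleftrightarrow>
     X \<subseteq> letters R \<and> (\<forall>i. i \<notin> X \<longrightarrow> g i = [(i, False)]) \<and>
     (\<forall>i\<in>X. fst ` set (g i) \<subseteq> letters R - X) \<and>
     (\<forall>r\<in>R. (subst g r, []) \<in> pres_eq n {}) \<and>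
     (\<forall>i<n. (g i, [(i, False)]) \<in> pres_eq n R)"

text \<open>Solving the relator \<open>u y w\<close> for its letter \<open>y\<close> gives \<open>y = (w u)\<inverse>\<close>; \<open>eliminate\<close> substitutes this
  word for the generator of \<open>y\<close>, inverted when \<open>y\<close> is an inverse letter.\<close>

definition eliminate ::
    "(nat \<Rightarrow> letter list) \<Rightarrow> letter list \<Rightarrow> letter \<Rightarrow> letter list \<Rightarrow> nat \<Rightarrow> letter list" where
  "eliminate g u y w =
     g(fst y := (let c = subst g (inv_word (w @ u)) in if snd y then inv_word c else c))"

lemma letters_words: "R \<subseteq> words n \<Longrightarrow> letters R \<subseteq> {..<n}"
  by (auto simp: letters_def words_def)

lemma collapsible_subset:
  assumes "collapsible R" "R' \<subseteq> R"
  shows "collapsible R'"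
  unfolding collapsible_def
proof (intro allI impI)
  fix S assume "S \<subseteq> R'" "S \<noteq> {}"
  with assms have "S \<subseteq> R" "S \<noteq> {}" "collapsible R"
    by auto
  then show "\<exists>r\<in>S. \<exists>i. occurrences i r = 1 \<and> i \<notin> letters (S - {r})"
    unfolding collapsible_def by simp
qed

lemma occurrences_eq_1_split:
  assumes "occurrences i r = 1"
  obtains u y w where "r = u @ y # w" "fst y = i" "i \<notin> fst ` set u" "i \<notin> fst ` set w"
proof -
  from assms obtain y where "filter (\<lambda>l. fst l = i) r = [y]"
    unfolding occurrences_def by (metis length_0_conv length_Suc_conv One_nat_def)
  then obtain u w where "r = u @ y # w" "\<forall>l\<in>set u. fst l \<noteq> i" "fst y = i"
      "filter (\<lambda>l. fst l = i) w = []"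
    by (auto simp: filter_eq_Cons_iff)
  then show thesis
    by (intro that) (auto simp: filter_empty_conv)
qed

lemma elimination_empty: "elimination n {} {} (\<lambda>i. [(i, False)])"
  by (simp add: elimination_def)

lemma elimination_in_words:
  assumes "elimination n R X g" "R \<subseteq> words n" "i < n"
  shows "g i \<in> words n"
proof (cases "i \<in> X")
  case True
  with assms(1) have "fst ` set (g i) \<subseteq> letters R"
    unfolding elimination_def by blast
  with letters_words[OF assms(2)] show ?thesis
    by (auto simp: words_def)
next
  case False
  with assms show ?thesis
    unfolding elimination_def by simp
qed

lemma subst_letter_eliminate: "subst_letter (eliminate g u y w) y = subst g (inv_word (w @ u))"
  by (cases y) (simp add: eliminate_def subst_letter_def Let_def)

lemma subst_eliminate_fresh:
  assumes "fst y \<notin> fst ` set v"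
  shows "subst (eliminate g u y w) v = subst g v"
proof (rule subst_cong)
  fix l assume "l \<in> set v"
  with assms have "fst l \<noteq> fst y"
    by (metis image_eqI)
  then show "eliminate g u y w (fst l) = g (fst l)"
    by (simp add: eliminate_def)
qed

lemma fst_set_eliminate: "fst ` set (eliminate g u y w (fst y)) = fst ` set (subst g (w @ u))"
  by (simp add: eliminate_def Let_def subst_inv_word image_Un Un_commute)

context
  fixes n :: nat and R :: "letter list set" and r u w :: "letter list" and y :: letter
    and X :: "nat set" and g :: "nat \<Rightarrow> letter list"
  assumes elim: "elimination n (R - {r}) X g" and R: "R \<subseteq> words n"
    and r: "r \<in> R" "r = u @ y # w"
    and fresh: "fst y \<notin> fst ` set u" "fst y \<notin> fst ` set w" "fst y \<notin> letters (R - {r})"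
begin

lemma letters_eliminate:
  assumes i: "i \<in> insert (fst y) X"
  shows "fst ` set (eliminate g u y w i) \<subseteq> letters R - insert (fst y) X"
proof -
  have fixed: "\<And>i. i \<notin> X \<Longrightarrow> g i = [(i, False)]"
    and X_letters: "\<And>i. i \<in> X \<Longrightarrow> fst ` set (g i) \<subseteq> letters (R - {r}) - X"
    using elim unfolding elimination_def by blast+
  have letters_mono: "letters (R - {r}) \<subseteq> letters R"
    by (auto simp: letters_def)
  show ?thesis
  proof (cases "i = fst y")
    case True
    have "fst ` set (g (fst l)) \<subseteq> letters R - insert (fst y) X" if l: "l \<in> set (w @ u)" for l
    proof (cases "fst l \<in> X")
      case True
      then show ?thesis
        using X_letters[OF True] letters_mono fresh(3) by blast
    next
      case False
      have "fst ` set r \<subseteq> letters R"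
        using r(1) by (auto simp: letters_def)
      then have "fst l \<in> letters R" "fst l \<noteq> fst y"
        using l r(2) fresh(1,2) by (auto simp: image_iff)
      with False show ?thesis
        by (simp add: fixed)
    qed
    then show ?thesis
      unfolding True fst_set_eliminate fst_set_subst by blast
  next
    case False
    with i have "i \<in> X" "eliminate g u y w i = g i"
      by (simp_all add: eliminate_def)
    then show ?thesis
      using X_letters[of i] letters_mono fresh(3) by auto
  qed
qed

lemma subst_eliminate_relator:
  assumes "r' \<in> R"
  shows "(subst (eliminate g u y w) r', []) \<in> pres_eq n {}"
proof (cases "r' = r")
  case True
  let ?U = "subst g u" and ?W = "subst g w"
  have g_words: "g j \<in> words n" if "j < n" for j
    using R by (intro elimination_in_words[OF elim _ that]) auto
  have "?U \<in> words n" "?W \<in> words n"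
    using R r subst_in_words[OF g_words] by auto
  moreover have "subst (eliminate g u y w) r' = ?U @ inv_word ?U @ inv_word ?W @ ?W"
    using True r(2) fresh by (simp add: subst_letter_eliminate subst_eliminate_fresh subst_inv_word)
  ultimately show ?thesis
    using pres_eq_append[OF pres_eq_append_inv_word pres_eq_inv_word_append] by fastforce
next
  case False
  with assms fresh(3) have "fst y \<notin> fst ` set r'"
    by (auto simp: letters_def)
  with False assms elim show ?thesis
    by (simp add: subst_eliminate_fresh elimination_def)
qed

lemma eliminate_pres_eq:
  assumes i: "i < n"
  shows "(eliminate g u y w i, [(i, False)]) \<in> pres_eq n R"
proof -
  have equal: "(g j, [(j, False)]) \<in> pres_eq n R" if "j < n" for j
    using elim that pres_eq_mono[of "R - {r}" R] unfolding elimination_def by blast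
  have g_words: "g j \<in> words n" if "j < n" for j
    using R by (intro elimination_in_words[OF elim _ that]) auto
  have words: "u \<in> words n" "w \<in> words n" "fst y < n" "inv_word (w @ u) \<in> words n"
    using R r by auto
  show ?thesis
  proof (cases "i = fst y")
    case True
    have "(inv_word (w @ u), [y]) \<in> pres_eq n R"
      using pres_eq_isolate_letter[OF pres_eq_relator[OF r(1), unfolded r(2)]] words by simp
    with subst_pres_eq_self[OF equal g_words words(4)]
    have y: "(subst g (inv_word (w @ u)), [y]) \<in> pres_eq n R"
      by (rule pres_eq_trans)
    have y_inv: "(inv_word (subst g (inv_word (w @ u))), [inv_letter y]) \<in> pres_eq n R"
      using pres_eq_inv_word[OF y] subst_in_words[OF g_words words(4)] words by simp
    obtain b where "y = (i, b)"
      using True by (cases y) simp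
    with y y_inv show ?thesis
      by (cases b) (simp_all add: eliminate_def inv_letter_def)
  next
    case False
    with equal[OF i] show ?thesis
      by (simp add: eliminate_def)
  qed
qed

lemma elimination_insert: "elimination n R (insert (fst y) X) (eliminate g u y w)"
proof -
  have "fst ` set r \<subseteq> letters R" "letters (R - {r}) \<subseteq> letters R"
    using r(1) by (auto simp: letters_def)
  with elim r(2) have "insert (fst y) X \<subseteq> letters R"
    unfolding elimination_def by auto
  moreover have "eliminate g u y w i = [(i, False)]" if "i \<notin> insert (fst y) X" for i
    using elim that unfolding elimination_def eliminate_def by simp
  ultimately show ?thesis
    unfolding elimination_def
    using letters_eliminate subst_eliminate_relator eliminate_pres_eq by blast
qed

end

lemma collapsible_elimination:
  assumes "finite R" "R \<subseteq> words n" "collapsible R"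
  shows "\<exists>X g. elimination n R X g"
  using assms
proof (induction R rule: finite_psubset_induct)
  case (psubset R)
  show ?case
  proof (cases "R = {}")
    case True
    then show ?thesis
      using elimination_empty by blast
  next
    case False
    with psubset.prems(2) have "\<exists>r\<in>R. \<exists>i. occurrences i r = 1 \<and> i \<notin> letters (R - {r})"
      unfolding collapsible_def by simp
    then obtain r i where r: "r \<in> R" "occurrences i r = 1" and fresh: "i \<notin> letters (R - {r})"
      by blast
    obtain u y w where split: "r = u @ y # w" "fst y = i" "i \<notin> fst ` set u" "i \<notin> fst ` set w"
      using occurrences_eq_1_split[OF r(2)] .
    have "collapsible (R - {r})"
      using collapsible_subset[OF psubset.prems(2)] by blast
    then obtain X g where "elimination n (R - {r}) X g"
      using psubset.IH[of "R - {r}"] r(1) psubset.prems(1) by blast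
    then have "elimination n R (insert (fst y) X) (eliminate g u y w)"
      using psubset.prems(1) r(1) split fresh by (intro elimination_insert) simp_all
    then show ?thesis
      by blast
  qed
qed

lemma elimination_letters:
  assumes elim: "elimination n R X g" and R: "R \<subseteq> words n" and i: "i < n"
  shows "fst ` set (g i) \<subseteq> {..<n} - X"
proof (cases "i \<in> X")
  case True
  with elim have "fst ` set (g i) \<subseteq> letters R - X"
    unfolding elimination_def by blast
  with letters_words[OF R] show ?thesis
    by blast
next
  case False
  with elim i show ?thesis
    unfolding elimination_def by simp
qed

lemma elimination_iso_free_group:
  assumes elim: "elimination n R X g" and R: "R \<subseteq> words n"
    and h: "bij_betw h ({..<n} - X) {..<k}"
  shows "presented_group n R \<cong> free_group_rank k"
proof -
  let ?Y = "{..<n} - X"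
  define \<rho> where "\<rho> j = (if j \<in> ?Y then [(h j, False)] else [])" for j
  define e where "e j = [(inv_into ?Y h j, False)]" for j
  define f where "f = (\<lambda>i. subst \<rho> (g i))"
  have \<rho>_words: "\<rho> j \<in> words k" for j
    using h by (auto simp: \<rho>_def bij_betw_def)
  have inv_h: "inv_into ?Y h j \<in> ?Y" "h (inv_into ?Y h j) = j" if "j < k" for j
  proof -
    from that h have j: "j \<in> h ` ?Y"
      by (simp add: bij_betw_def)
    show "inv_into ?Y h j \<in> ?Y"
      using inv_into_into[OF j] .
    show "h (inv_into ?Y h j) = j"
      using f_inv_into_f[OF j] .
  qed
  have "induced_hom f k {} \<in> iso (presented_group n R) (presented_group k {})"
  proof (rule induced_hom_iso[OF R])
    show "f i \<in> words k" if "i < n" for i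
      unfolding f_def using subst_in_words[OF \<rho>_words elimination_in_words[OF elim R that]] .
    show "e j \<in> words n" if "j < k" for j
      using inv_h(1)[OF that] by (simp add: e_def)
    show "(subst f r, []) \<in> pres_eq k {}" if "r \<in> R" for r
    proof -
      have "(subst \<rho> (subst g r), subst \<rho> []) \<in> pres_eq k {}"
        using elim that unfolding elimination_def by (intro pres_eq_subst[OF \<rho>_words]) auto
      then show ?thesis
        by (simp add: f_def subst_subst)
    qed
    show "(subst e (f i), [(i, False)]) \<in> pres_eq n R" if "i < n" for i
    proof -
      have "subst e (f i) = subst (\<lambda>j. subst e (\<rho> j)) (g i)"
        by (simp add: f_def subst_subst)
      also have "\<dots> = g i"
        using elimination_letters[OF elim R that] h
        by (intro subst_eq_self) (auto simp: \<rho>_def e_def subst_letter_def bij_betw_def)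
      finally show ?thesis
        using elim that unfolding elimination_def by simp
    qed
    show "(subst f (e j), [(j, False)]) \<in> pres_eq k {}" if "j < k" for j
      using inv_h[OF that] elim unfolding elimination_def
      by (simp add: e_def f_def subst_letter_def \<rho>_def)
  qed simp_all
  then show ?thesis
    unfolding is_iso_def free_group_rank_def by blast
qed

lemma elimination_free_group:
  assumes "elimination n R X g" "R \<subseteq> words n"
  shows "is_free_group (presented_group n R)"
proof -
  obtain h where "bij_betw h ({..<n} - X) {..<card ({..<n} - X)}"
    using ex_bij_betw_finite_nat[of "{..<n} - X"] by (auto simp: atLeast0LessThan)
  then show ?thesis
    unfolding is_free_group_def using elimination_iso_free_group[OF assms] by blast
qed

lemma collapsible_free_group:
  "finite R \<Longrightarrow> R \<subseteq> words n \<Longrightarrow> collapsible R \<Longrightarrow> is_free_group (presented_group n R)"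
  using collapsible_elimination elimination_free_group by blast

section \<open>Dense families of triangular relators\<close>

lemma sum_occurrences: "finite V \<Longrightarrow> fst ` set r \<subseteq> V \<Longrightarrow> (\<Sum>i\<in>V. occurrences i r) = length r"
proof (induction r)
  case (Cons l r)
  have "occurrences i (l # r) = (if i = fst l then 1 else 0) + occurrences i r" for i
    by (simp add: occurrences_def)
  then have "(\<Sum>i\<in>V. occurrences i (l # r)) =
      (\<Sum>i\<in>V. if i = fst l then 1 else 0) + (\<Sum>i\<in>V. occurrences i r)"
    by (simp add: sum.distrib)
  with Cons show ?case
    by simp
qed (simp add: occurrences_def)

lemma occurrences_pos: "i \<in> fst ` set r \<Longrightarrow> 0 < occurrences i r"
  by (auto simp: occurrences_def filter_empty_conv)

lemma finite_letters: "finite S \<Longrightarrow> finite (letters S)"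
  by (simp add: letters_def)

text \<open>Without a relator owning a private letter, every letter is used at least twice.\<close>

lemma two_card_letters_le_sum_length:
  assumes fin: "finite S"
    and no_private: "\<And>r i. r \<in> S \<Longrightarrow> occurrences i r = 1 \<Longrightarrow> i \<in> letters (S - {r})"
  shows "2 * card (letters S) \<le> (\<Sum>r\<in>S. length r)"
proof -
  have twice: "2 \<le> (\<Sum>r\<in>S. occurrences i r)" if i: "i \<in> letters S" for i
  proof -
    obtain r where r: "r \<in> S" "i \<in> fst ` set r"
      using i unfolding letters_def by blast
    show ?thesis
    proof (cases "occurrences i r = 1")
      case True
      then obtain r' where r': "r' \<in> S - {r}" "i \<in> fst ` set r'"
        using no_private[OF r(1) True] unfolding letters_def by blast
      have "occurrences i r + occurrences i r' = (\<Sum>r\<in>{r, r'}. occurrences i r)"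
        using r' by (subst sum.insert) auto
      also have "\<dots> \<le> (\<Sum>r\<in>S. occurrences i r)"
        using r r' fin by (intro sum_mono2) auto
      finally show ?thesis
        using True occurrences_pos[OF r'(2)] by linarith
    next
      case False
      then have "2 \<le> occurrences i r"
        using occurrences_pos[OF r(2)] by linarith
      also have "\<dots> \<le> (\<Sum>r\<in>S. occurrences i r)"
        using r fin by (intro member_le_sum) auto
      finally show ?thesis .
    qed
  qed
  have "2 * card (letters S) = (\<Sum>i\<in>letters S. 2)"
    by simp
  also have "\<dots> \<le> (\<Sum>i\<in>letters S. \<Sum>r\<in>S. occurrences i r)"
    by (rule sum_mono) (rule twice)
  also have "\<dots> = (\<Sum>r\<in>S. \<Sum>i\<in>letters S. occurrences i r)"
    by (rule sum.swap)
  also have "\<dots> = (\<Sum>r\<in>S. length r)"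
    using fin by (intro sum.cong refl sum_occurrences finite_letters) (auto simp: letters_def)
  finally show ?thesis .
qed

definition tri_words_on :: "nat \<Rightarrow> nat set \<Rightarrow> letter list set" where
  "tri_words_on n V = {w \<in> tri_words n. fst ` set w \<subseteq> V}"

definition ceil_two_thirds :: "nat \<Rightarrow> nat" where
  "ceil_two_thirds v = (2 * v + 2) div 3"

lemma tri_words_length: "w \<in> tri_words n \<Longrightarrow> length w = 3"
  by (auto simp: tri_words_def)

lemma tri_words_in_words: "tri_words n \<subseteq> words n"
  by (auto simp: tri_words_def)

lemma tri_words_on_subset: "tri_words_on n V \<subseteq> tri_words n"
  by (simp add: tri_words_on_def)

lemma finite_card_tri_words_on:
  assumes "finite V"
  shows "finite (tri_words_on n V)" "card (tri_words_on n V) \<le> (2 * card V) ^ 3"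
proof -
  have sub: "tri_words_on n V \<subseteq> {w. set w \<subseteq> V \<times> UNIV \<and> length w = 3}"
    by (auto simp: tri_words_on_def tri_words_length mem_Times_iff)
  have fin: "finite (V \<times> (UNIV :: bool set))"
    using assms by simp
  show "finite (tri_words_on n V)"
    using finite_subset[OF sub finite_lists_length_eq[OF fin]] .
  have "card (tri_words_on n V) \<le> card (V \<times> (UNIV :: bool set)) ^ 3"
    using card_mono[OF finite_lists_length_eq[OF fin] sub] card_lists_length_eq[OF fin] by simp
  then show "card (tri_words_on n V) \<le> (2 * card V) ^ 3"
    by (simp add: card_cartesian_product mult.commute)
qed

lemma finite_tri_words: "finite (tri_words n)"
proof -
  have "tri_words n = tri_words_on n {..<n}"
    by (auto simp: tri_words_on_def tri_words_def)
  then show ?thesis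
    using finite_card_tri_words_on(1)[of "{..<n}" n] by simp
qed

lemma not_collapsibleE:
  assumes "\<not> collapsible R"
  obtains S where "S \<subseteq> R" "S \<noteq> {}"
    "\<And>r i. r \<in> S \<Longrightarrow> occurrences i r = 1 \<Longrightarrow> i \<in> letters (S - {r})"
proof -
  obtain S where "S \<subseteq> R" "S \<noteq> {}"
    and "\<not> (\<exists>r\<in>S. \<exists>i. occurrences i r = 1 \<and> i \<notin> letters (S - {r}))"
    using assms unfolding collapsible_def by auto
  then show thesis
    using that by blast
qed

lemma letters_eq_empty_iff: "letters S = {} \<longleftrightarrow> (\<forall>r\<in>S. r = [])"
  by (auto simp: letters_def)

lemma ceil_two_thirds_card_letters_le:
  assumes S: "S \<subseteq> tri_words n"
    and no_private: "\<And>r i. r \<in> S \<Longrightarrow> occurrences i r = 1 \<Longrightarrow> i \<in> letters (S - {r})"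
  shows "ceil_two_thirds (card (letters S)) \<le> card S"
proof -
  have "finite S"
    using finite_subset[OF S finite_tri_words] .
  then have "2 * card (letters S) \<le> (\<Sum>r\<in>S. length r)"
    using two_card_letters_le_sum_length no_private by blast
  also have "\<dots> = (\<Sum>r\<in>S. 3)"
    using S tri_words_length by (intro sum.cong) auto
  finally show ?thesis
    by (simp add: ceil_two_thirds_def)
qed

lemma non_collapsible_dense_subset:
  assumes R: "R \<subseteq> tri_words n" and "\<not> collapsible R"
  obtains V B where "V \<subseteq> {..<n}" "V \<noteq> {}" "B \<subseteq> R" "B \<subseteq> tri_words_on n V"
    "card B = ceil_two_thirds (card V)"
proof -
  obtain S where S: "S \<subseteq> R" "S \<noteq> {}"
    and no_private: "\<And>r i. r \<in> S \<Longrightarrow> occurrences i r = 1 \<Longrightarrow> i \<in> letters (S - {r})"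
    using not_collapsibleE[OF assms(2)] by blast
  have S_tri: "S \<subseteq> tri_words n"
    using S(1) R by (rule order_trans)
  obtain B where B: "B \<subseteq> S" "card B = ceil_two_thirds (card (letters S))"
    using ceil_two_thirds_card_letters_le[OF S_tri no_private] by (meson obtain_subset_with_card_n)
  have "letters S \<subseteq> {..<n}"
    using letters_words S_tri tri_words_in_words by (meson order_trans)
  moreover have "letters S \<noteq> {}"
    using S(2) S_tri tri_words_length unfolding letters_eq_empty_iff by fastforce
  moreover have "S \<subseteq> tri_words_on n (letters S)"
    using S_tri by (auto simp: tri_words_on_def letters_def)
  ultimately show thesis
    using B S(1) that[of "letters S" B] by (meson order_trans)
qed

lemma non_free_dense_subset:
  assumes R: "R \<subseteq> tri_words n" and "\<not> is_free_group (presented_group n R)"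
  obtains V B where "V \<subseteq> {..<n}" "V \<noteq> {}" "B \<subseteq> R" "B \<subseteq> tri_words_on n V"
    "card B = ceil_two_thirds (card V)"
proof -
  have "\<not> collapsible R"
    using assms collapsible_free_group[of R n] finite_subset[OF R finite_tri_words]
      tri_words_in_words by blast
  with R show thesis
    using non_collapsible_dense_subset that by blast
qed

section \<open>Random subsets and estimates\<close>

definition subset_prob :: "'a set \<Rightarrow> real \<Rightarrow> 'a set \<Rightarrow> real" where
  "subset_prob A p R = p ^ card R * (1 - p) ^ (card A - card R)"

lemma sum_Pow_card:
  fixes F :: "nat \<Rightarrow> 'b::comm_semiring_1"
  assumes "finite A"
  shows "(\<Sum>R\<in>Pow A. F (card R)) = (\<Sum>k\<le>card A. of_nat (card A choose k) * F k)"
proof -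
  have "(\<Sum>R\<in>Pow A. F (card R)) = (\<Sum>k\<le>card A. \<Sum>R\<in>{R \<in> Pow A. card R = k}. F (card R))"
    using assms by (intro sum.group[symmetric]) (auto intro: card_mono)
  also have "\<dots> = (\<Sum>k\<le>card A. of_nat (card A choose k) * F k)"
  proof (rule sum.cong[OF refl])
    fix k
    have "{R \<in> Pow A. card R = k} = {R. R \<subseteq> A \<and> card R = k}"
      by auto
    then show "(\<Sum>R\<in>{R \<in> Pow A. card R = k}. F (card R)) = of_nat (card A choose k) * F k"
      using n_subsets[OF assms, of k] by simp
  qed
  finally show ?thesis .
qed

lemma sum_Pow_binomial:
  fixes p q :: real
  assumes "finite A"
  shows "(\<Sum>R\<in>Pow A. p ^ card R * q ^ (card A - card R)) = (p + q) ^ card A"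
  using sum_Pow_card[OF assms, of "\<lambda>k. p ^ k * q ^ (card A - k)"]
  by (simp add: binomial_ring mult.assoc)

lemma sum_subset_prob: "finite A \<Longrightarrow> (\<Sum>R\<in>Pow A. subset_prob A p R) = 1"
  using sum_Pow_binomial[of A p "1 - p"] by (simp add: subset_prob_def)

lemma sum_subset_prob_supsets:
  assumes A: "finite A" and B: "B \<subseteq> A"
  shows "(\<Sum>R\<in>{R \<in> Pow A. B \<subseteq> R}. subset_prob A p R) = p ^ card B"
proof -
  have finB: "finite B"
    using A B finite_subset by blast
  have "(\<Sum>R\<in>{R \<in> Pow A. B \<subseteq> R}. subset_prob A p R) =
      (\<Sum>R'\<in>Pow (A - B). subset_prob A p (B \<union> R'))"
    by (rule sum.reindex_bij_witness[of _ "\<lambda>R'. B \<union> R'" "\<lambda>R. R - B"]) (use B in \<open>auto simp: Un_absorb1\<close>)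
  also have "\<dots> = (\<Sum>R'\<in>Pow (A - B). p ^ card B * (p ^ card R' * (1 - p) ^ (card (A - B) - card R')))"
  proof (rule sum.cong[OF refl])
    fix R' assume "R' \<in> Pow (A - B)"
    then have R': "R' \<subseteq> A - B" "finite R'"
      using A finite_subset by auto
    have "card (B \<union> R') = card B + card R'"
      using R' finB by (subst card_Un_disjoint) auto
    moreover have "card R' \<le> card (A - B)"
      using R' A by (intro card_mono) auto
    moreover have "card (A - B) = card A - card B"
      using B finB by (simp add: card_Diff_subset)
    ultimately show "subset_prob A p (B \<union> R') =
        p ^ card B * (p ^ card R' * (1 - p) ^ (card (A - B) - card R'))"
      by (simp add: subset_prob_def power_add)
  qed
  also have "\<dots> = p ^ card B"
    using sum_Pow_binomial[of "A - B" p "1 - p"] A by (simp add: sum_distrib_left[symmetric])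
  finally show ?thesis .
qed

lemma subset_prob_union_bound:
  assumes A: "finite A" and I: "finite I" and B: "\<And>i. i \<in> I \<Longrightarrow> B i \<subseteq> A"
    and p: "0 \<le> p" "p \<le> 1"
    and cover: "\<And>R. R \<subseteq> A \<Longrightarrow> \<not> P R \<Longrightarrow> \<exists>i\<in>I. B i \<subseteq> R"
  shows "(\<Sum>R\<in>Pow A. if P R then 0 else subset_prob A p R) \<le> (\<Sum>i\<in>I. p ^ card (B i))"
proof -
  have nonneg: "0 \<le> subset_prob A p R" for R
    using p by (simp add: subset_prob_def)
  have "(\<Sum>R\<in>Pow A. if P R then 0 else subset_prob A p R) \<le>
      (\<Sum>R\<in>Pow A. \<Sum>i\<in>I. if B i \<subseteq> R then subset_prob A p R else 0)"
  proof (rule sum_mono)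
    fix R assume "R \<in> Pow A"
    show "(if P R then 0 else subset_prob A p R) \<le> (\<Sum>i\<in>I. if B i \<subseteq> R then subset_prob A p R else 0)"
    proof (cases "P R")
      case False
      with cover \<open>R \<in> Pow A\<close> obtain i where "i \<in> I" "B i \<subseteq> R"
        by blast
      then have "subset_prob A p R \<le> (\<Sum>i\<in>I. if B i \<subseteq> R then subset_prob A p R else 0)"
        using member_le_sum[of i I "\<lambda>i. if B i \<subseteq> R then subset_prob A p R else 0"] I nonneg
        by simp
      with False show ?thesis
        by simp
    qed (simp add: nonneg sum_nonneg)
  qed
  also have "\<dots> = (\<Sum>i\<in>I. \<Sum>R\<in>Pow A. if B i \<subseteq> R then subset_prob A p R else 0)"
    by (rule sum.swap)
  also have "\<dots> = (\<Sum>i\<in>I. \<Sum>R\<in>{R \<in> Pow A. B i \<subseteq> R}. subset_prob A p R)"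
    using A by (intro sum.cong refl sum.inter_filter[symmetric]) simp
  also have "\<dots> = (\<Sum>i\<in>I. p ^ card (B i))"
    using sum_subset_prob_supsets[OF A B] by simp
  finally show ?thesis .
qed

lemma power_div_fact_le_exp: "0 \<le> x \<Longrightarrow> x ^ k / fact k \<le> exp (x :: real)"
proof -
  assume x: "0 \<le> x"
  have "summable (\<lambda>n. x ^ n / fact n)"
    using summable_exp[of x] by (simp add: field_simps)
  then have "(\<Sum>n\<in>{k}. x ^ n / fact n) \<le> (\<Sum>n. x ^ n / fact n)"
    by (rule sum_le_suminf) (use x in auto)
  also have "\<dots> = exp x"
    using exp_converges[of x] by (simp add: sums_iff field_simps)
  finally show ?thesis
    by simp
qed

lemma power_self_le_three_power_fact: "real k ^ k \<le> 3 ^ k * fact k"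
proof -
  have "real k ^ k / fact k \<le> exp (real k)"
    by (rule power_div_fact_le_exp) simp
  also have "\<dots> = exp 1 ^ k"
    using exp_of_nat_mult[of k 1] by simp
  also have "\<dots> \<le> 3 ^ k"
    by (rule power_mono[OF exp_le]) simp
  finally show ?thesis
    by (simp add: divide_simps)
qed

lemma binomial_le_three_mul_div_power: "real (N choose k) \<le> (3 * real N / real k) ^ k"
proof (cases "k = 0")
  case False
  have "real (N choose k) * real k ^ k \<le> real (N choose k) * (3 ^ k * fact k)"
    by (rule mult_left_mono[OF power_self_le_three_power_fact]) simp
  also have "\<dots> = 3 ^ k * (real (N choose k) * fact k)"
    by (simp add: mult_ac)
  also have "\<dots> \<le> 3 ^ k * real N ^ k"
    using of_nat_mono[OF binomial_fact_pow[of N k]] by (intro mult_left_mono) simp_all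
  finally show ?thesis
    using False by (simp add: power_divide power_mult_distrib le_divide_eq)
qed simp

lemma ceil_two_thirds_bounds:
  "2 * v \<le> 3 * ceil_two_thirds v" "1 \<le> v \<Longrightarrow> v < 2 * ceil_two_thirds v"
  unfolding ceil_two_thirds_def by linarith+

lemma dense_binomial_bound:
  fixes p q :: real
  assumes M: "M \<le> (2 * v) ^ 3" and p: "0 \<le> p" "p \<le> q"
  shows "real (M choose ceil_two_thirds v) * p ^ ceil_two_thirds v
    \<le> (36 * real v ^ 2 * q) ^ ceil_two_thirds v"
proof (cases "ceil_two_thirds v = 0")
  case False
  let ?k = "ceil_two_thirds v"
  have k: "2 * real v \<le> 3 * real ?k"
    using of_nat_mono[OF ceil_two_thirds_bounds(1)[of v]] by simp
  have "3 * real M / real ?k \<le> 3 * (8 * real v ^ 3) / real ?k"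
    using of_nat_mono[OF M] by (intro divide_right_mono) auto
  also have "\<dots> \<le> 36 * real v ^ 2"
  proof -
    have "12 * real v ^ 2 * (2 * real v) \<le> 12 * real v ^ 2 * (3 * real ?k)"
      using k by (intro mult_left_mono) simp_all
    with False show ?thesis
      by (simp add: divide_le_eq power3_eq_cube power2_eq_square mult_ac)
  qed
  finally have "(3 * real M / real ?k) ^ ?k \<le> (36 * real v ^ 2) ^ ?k"
    by (intro power_mono) simp_all
  then have "real (M choose ?k) \<le> (36 * real v ^ 2) ^ ?k"
    using binomial_le_three_mul_div_power[of M ?k] by linarith
  moreover have "p ^ ?k \<le> q ^ ?k"
    using p by (intro power_mono)
  ultimately show ?thesis
    using p by (simp add: power_mult_distrib mult_mono)
qed simp

lemma power_estimate:
  fixes r :: real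
  assumes r: "0 < r" "r \<le> 1" and vk: "v < 2 * k" "2 * v \<le> 3 * k"
  shows "(3 / r) ^ v * (r ^ 2 / 64) ^ k \<le> r * (1 / 2) ^ v"
proof -
  have "(r ^ 2) ^ k = r ^ v * r ^ (2 * k - v)"
    using vk(1) by (simp add: power_mult[symmetric] power_add[symmetric])
  then have "(3 / r) ^ v * (r ^ 2 / 64) ^ k = 3 ^ v * r ^ (2 * k - v) / 64 ^ k"
    using r by (simp add: power_divide field_simps)
  also have "\<dots> \<le> 3 ^ v * r / 16 ^ v"
  proof (intro frac_le mult_left_mono)
    show "r ^ (2 * k - v) \<le> r"
      using power_decreasing[of 1 "2 * k - v" r] r vk(1) by simp
    have "(4::real) ^ (2 * v) \<le> 4 ^ (3 * k)"
      using vk(2) by (intro power_increasing) auto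
    then show "(16::real) ^ v \<le> 64 ^ k"
      by (simp add: power_mult)
  qed (use r in auto)
  also have "\<dots> \<le> r * (1 / 2) ^ v"
  proof -
    have "(2::real) ^ v * 3 ^ v \<le> 16 ^ v"
      unfolding power_mult_distrib[symmetric] by (intro power_mono) auto
    with r show ?thesis
      by (simp add: power_divide field_simps)
  qed
  finally show ?thesis .
qed

lemma sum_mult_half_power_le: "(\<Sum>v\<le>n. real v * (1 / 2) ^ v) \<le> 2"
proof -
  have "(\<Sum>v\<le>n. real v * (1 / 2) ^ v) = 2 - (real n + 2) / 2 ^ n"
    by (induction n) (auto simp: field_simps)
  then show ?thesis
    by simp
qed

lemma dense_count_bound:
  assumes v: "1 \<le> v" "v \<le> n"
  shows "real (n choose v) * (36 * real v ^ 2 * (1 / (2304 * real n ^ 2))) ^ ceil_two_thirds v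
    \<le> real v / real n * (1 / 2) ^ v"
proof -
  define r where "r = real v / real n"
  have r: "0 < r" "r \<le> 1"
    using v by (auto simp: r_def)
  have binom: "real (n choose v) \<le> (3 / r) ^ v"
    using binomial_le_three_mul_div_power[of n v] by (simp add: r_def)
  have q_eq: "36 * real v ^ 2 * (1 / (2304 * real n ^ 2)) = r ^ 2 / 64"
    by (simp add: r_def power_divide)
  have "real (n choose v) * (36 * real v ^ 2 * (1 / (2304 * real n ^ 2))) ^ ceil_two_thirds v
      \<le> (3 / r) ^ v * (r ^ 2 / 64) ^ ceil_two_thirds v"
    unfolding q_eq by (rule mult_right_mono[OF binom]) simp
  also have "\<dots> \<le> r * (1 / 2) ^ v"
    using r ceil_two_thirds_bounds[of v] v(1) by (intro power_estimate) auto
  finally show ?thesis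
    by (simp add: r_def)
qed

lemma one_minus_prob_tri_free:
  "1 - prob_tri_free n p = (\<Sum>R\<in>Pow (tri_words n).
     if is_free_group (presented_group n R) then 0 else subset_prob (tri_words n) p R)"
proof -
  have "prob_tri_free n p = (\<Sum>R\<in>Pow (tri_words n).
      if is_free_group (presented_group n R) then subset_prob (tri_words n) p R else 0)"
    unfolding prob_tri_free_def subset_prob_def ..
  then have "1 - prob_tri_free n p = (\<Sum>R\<in>Pow (tri_words n). subset_prob (tri_words n) p R) -
      (\<Sum>R\<in>Pow (tri_words n).
        if is_free_group (presented_group n R) then subset_prob (tri_words n) p R else 0)"
    using sum_subset_prob[OF finite_tri_words, of n p] by simp
  also have "\<dots> = (\<Sum>R\<in>Pow (tri_words n).
      if is_free_group (presented_group n R) then 0 else subset_prob (tri_words n) p R)"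
    by (subst sum_subtractf[symmetric]) (intro sum.cong; simp)
  finally show ?thesis .
qed

lemma prob_tri_free_le_one:
  assumes "0 \<le> p" "p \<le> 1"
  shows "prob_tri_free n p \<le> 1"
proof -
  have "0 \<le> 1 - prob_tri_free n p"
    unfolding one_minus_prob_tri_free using assms by (intro sum_nonneg) (simp add: subset_prob_def)
  then show ?thesis
    by simp
qed

lemma non_free_prob_le:
  assumes p: "0 \<le> p" "p \<le> 1"
  shows "(\<Sum>R\<in>Pow (tri_words n).
      if is_free_group (presented_group n R) then 0 else subset_prob (tri_words n) p R)
    \<le> (\<Sum>V\<in>Pow {..<n} - {{}}.
      real (card (tri_words_on n V) choose ceil_two_thirds (card V)) * p ^ ceil_two_thirds (card V))"
proof -
  let ?k = "\<lambda>V. ceil_two_thirds (card V)"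
  define Bs where "Bs V = {B. B \<subseteq> tri_words_on n V \<and> card B = ?k V}" for V
  have fin_Bs: "finite (Bs V)" for V
    using finite_tri_words[of n] tri_words_on_subset[of n V]
    by (auto simp: Bs_def intro: finite_subset[of _ "Pow (tri_words n)"])
  have "(\<Sum>R\<in>Pow (tri_words n).
      if is_free_group (presented_group n R) then 0 else subset_prob (tri_words n) p R)
    \<le> (\<Sum>x\<in>Sigma (Pow {..<n} - {{}}) Bs. p ^ card (snd x))"
  proof (rule subset_prob_union_bound[OF finite_tri_words _ _ p])
    show "finite (Sigma (Pow {..<n} - {{}}) Bs)"
      using fin_Bs by auto
    show "snd x \<subseteq> tri_words n" if x: "x \<in> Sigma (Pow {..<n} - {{}}) Bs" for x
    proof -
      obtain V B where "x = (V, B)" "B \<subseteq> tri_words_on n V"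
        using x by (auto simp: Bs_def)
      then show ?thesis
        using tri_words_on_subset[of n V] by simp
    qed
    show "\<exists>x\<in>Sigma (Pow {..<n} - {{}}) Bs. snd x \<subseteq> R"
      if R: "R \<subseteq> tri_words n" "\<not> is_free_group (presented_group n R)" for R
    proof -
      obtain V B where "V \<subseteq> {..<n}" "V \<noteq> {}" "B \<subseteq> R" "B \<subseteq> tri_words_on n V"
          "card B = ?k V"
        using non_free_dense_subset[OF R] .
      then show ?thesis
        by (intro bexI[of _ "(V, B)"]) (auto simp: Bs_def)
    qed
  qed
  also have "\<dots> = (\<Sum>V\<in>Pow {..<n} - {{}}. \<Sum>B\<in>Bs V. p ^ card B)"
    using fin_Bs by (subst sum.Sigma) (auto simp: split_beta)
  also have "\<dots> = (\<Sum>V\<in>Pow {..<n} - {{}}. real (card (tri_words_on n V) choose ?k V) * p ^ ?k V)"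
  proof (rule sum.cong[OF refl])
    fix V assume "V \<in> Pow {..<n} - {{}}"
    then have "finite V"
      by (auto intro: finite_subset)
    then show "(\<Sum>B\<in>Bs V. p ^ card B) = real (card (tri_words_on n V) choose ?k V) * p ^ ?k V"
      using n_subsets[OF finite_card_tri_words_on(1)[OF \<open>finite V\<close>]] by (simp add: Bs_def)
  qed
  finally show ?thesis .
qed

lemma prob_tri_free_ge:
  assumes p: "0 \<le> p" "p \<le> 1" "p \<le> 1 / (2304 * real n ^ 2)"
  shows "1 - 2 / real n \<le> prob_tri_free n p"
proof -
  let ?k = "\<lambda>v. ceil_two_thirds v" and ?q = "1 / (2304 * real n ^ 2)"
  define D where "D v = (if v = 0 then 0 else (36 * real v ^ 2 * ?q) ^ ?k v)" for v
  have D_nonneg: "0 \<le> D v" for v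
    by (simp add: D_def)
  have "1 - prob_tri_free n p
      \<le> (\<Sum>V\<in>Pow {..<n} - {{}}. real (card (tri_words_on n V) choose ?k (card V)) * p ^ ?k (card V))"
    unfolding one_minus_prob_tri_free using non_free_prob_le[OF p(1,2)] .
  also have "\<dots> \<le> (\<Sum>V\<in>Pow {..<n} - {{}}. D (card V))"
  proof (rule sum_mono)
    fix V assume V: "V \<in> Pow {..<n} - {{}}"
    then have "finite V"
      by (auto intro: finite_subset)
    with V have "card V \<noteq> 0"
      by simp
    then show "real (card (tri_words_on n V) choose ?k (card V)) * p ^ ?k (card V) \<le> D (card V)"
      using dense_binomial_bound[OF finite_card_tri_words_on(2)[OF \<open>finite V\<close>, of n] p(1,3)]
      by (simp add: D_def)
  qed
  also have "\<dots> \<le> (\<Sum>V\<in>Pow {..<n}. D (card V))"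
    using D_nonneg by (intro sum_mono2) auto
  also have "\<dots> = (\<Sum>v\<le>n. real (n choose v) * D v)"
    using sum_Pow_card[of "{..<n}" D] by simp
  also have "\<dots> \<le> (\<Sum>v\<le>n. real v / real n * (1 / 2) ^ v)"
    using dense_count_bound by (intro sum_mono) (simp add: D_def)
  also have "\<dots> = (\<Sum>v\<le>n. real v * (1 / 2) ^ v) / real n"
    by (simp add: sum_divide_distrib)
  also have "\<dots> \<le> 2 / real n"
    using sum_mult_half_power_le[of n] by (simp add: divide_right_mono)
  finally show ?thesis
    by linarith
qed

theorem theorem1p1:
  shows "\<exists>c>0. \<forall>p :: nat \<Rightarrow> real.
           (\<forall>n. 0 \<le> p n \<and> p n \<le> 1) \<longrightarrow>
           (\<forall>n. p n \<le> c / (real n)^2) \<longrightarrow>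
           (\<lambda>n. prob_tri_free n (p n)) \<longlonglongrightarrow> 1"
proof (intro exI[of _ "1 / 2304"] conjI allI impI)
  fix p :: "nat \<Rightarrow> real"
  assume p: "\<forall>n. 0 \<le> p n \<and> p n \<le> 1" and small: "\<forall>n. p n \<le> 1 / 2304 / (real n)^2"
  have lower: "\<forall>\<^sub>F n in sequentially. 1 - 2 / real n \<le> prob_tri_free n (p n)"
    using p small by (intro always_eventually allI prob_tri_free_ge) auto
  have upper: "\<forall>\<^sub>F n in sequentially. prob_tri_free n (p n) \<le> 1"
    using p by (intro always_eventually allI prob_tri_free_le_one) auto
  have "(\<lambda>n. 1 - 2 / real n) \<longlonglongrightarrow> 1"
    using tendsto_diff[OF tendsto_const lim_const_over_n[of 2]] by simp
  then show "(\<lambda>n. prob_tri_free n (p n)) \<longlonglongrightarrow> 1"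
    using tendsto_sandwich[OF lower upper] by blast
qed simp

end
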